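(* Let $((f_t),(g_t),(h_t))$ be a $W_{1,+}$-geodesic on $G$, let $x\in G$, $\gamma\in\mathrm{SE}\Gamma_{1,x}$ and $\tilde\gamma\in\mathrm{SE}\Gamma_{2,x}$. Then for all $t\in[0,1]$, $$f_t(x)=\frac{C_\gamma(t)\,C_{\tilde\gamma}(t)}{C_{\gamma\cup\tilde\gamma}},$$ where $\gamma\cup\tilde\gamma$ is the concatenation of $\gamma$ and $\tilde\gamma$ (an extremal path, for which $C_{\gamma\cup\tilde\gamma}(t)$ is constant).
   Context: $G$ is a connected, locally finite graph with graph distance $d$; geodesics are paths of adjacent vertices $\gamma(0),\dots,\gamma(n)$ with $n=d(\gamma(0),\gamma(n))$, $L(\gamma)=n$, $e_0(\gamma)=\gamma(0)$, $e_1(\gamma)=\gamma(n)$. For finitely supported probability distributions $f_0,f_1$: $\Pi_1(f_0,f_1)$ = couplings minimizing $\sum d(x,y)\pi(x,y)$ (minimum $W_1$), $\mathcal{C}(f_0,f_1)=\{(x,y):\pi(x,y)>0$ for some $\pi\in\Pi_1\}$; $W_1$-orientation: adjacent $x,y$ get $x\to y$ iff some geodesic $\gamma$ with $(e_0(\gamma),e_1(\gamma))\in\mathcal{C}(f_0,f_1)$ has $\gamma(k)=x,\gamma(k+1)=y$. Oriented paths: $\gamma(i)\to\gamma(i+1)$; $\gamma_i=\gamma(i)$. $E(G)=\{(xy):x\to y\}$, $T(G)$ triples $x_0\to x_1\to x_2$, $\mathcal{F}(x)=\{y:x\to y\}$, $\mathcal{E}(x)=\{y:y\to x\}$; $\nabla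 g(x_1)=\sum_{\mathcal{F}(x_1)}g(x_1x_2)-\sum_{\mathcal{E}(x_1)}g(x_0x_1)$, $\nabla h(x_1x_2)=\sum_{x_3\in\mathcal{F}(x_2)}h(x_1x_2x_3)-\sum_{x_0\in\mathcal{E}(x_1)}h(x_0x_1x_2)$. $W_{1,+}$-geodesic: a family $(f_t)_{t\in[0,1]}$ from $f_0$ to $f_1$ with $W_1(f_s,f_t)=|t-s|W_1(f_0,f_1)$ (graph $W_1$-oriented w.r.t. $(f_0,f_1)$), differentiable in $t$, with $g_t$ on $E(G)$, $h_t$ on $T(G)$, $\partial_tf_t=-\nabla g_t$, $\partial_tg_t=-\nabla h_t$, $g_t>0$, $f_t(x_1)h_t(x_0x_1x_2)=g_t(x_0x_1)g_t(x_1x_2)$. $C_\gamma(t)=f_t(\gamma_0)$ if $L(\gamma)=0$, $g_t(\gamma_0\gamma_1)$ if $L(\gamma)=1$, $\prod_{i=0}^{n-1}g_t(\gamma_i\gamma_{i+1})/\prod_{j=1}^{n-1}f_t(\gamma_j)$ if $n\ge2$. $\mathcal{A}=\{x:\mathcal{E}(x)=\emptyset\}$, $\mathcal{B}=\{x:\mathcal{F}(x)=\emptyset\}$; extremal oriented paths start in $\mathcal{A}$ and end in $\mathcal{B}$; $\mathrm{SE}\Gamma_{1,x}$: oriented paths from a vertex of $\mathcal{A}$ to $x$; $\mathrm{SE}\Gamma_{2,x}$: oriented paths from $x$ to a vertex of $\mathcal{B}$. *)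

theory Defs
  imports "HOL-Analysis.Analysis"
begin

definition is_walk :: "('a \<Rightarrow> 'a \<Rightarrow> bool) \<Rightarrow> 'a list \<Rightarrow> bool" where
  "is_walk adj xs \<longleftrightarrow> xs \<noteq> [] \<and> successively adj xs"

definition conn_locfin_graph :: "('a \<Rightarrow> 'a \<Rightarrow> bool) \<Rightarrow> bool" where
  "conn_locfin_graph adj \<longleftrightarrow>
     (\<forall>x y. adj x y \<longrightarrow> adj y x) \<and> (\<forall>x. \<not> adj x x) \<and>
     (\<forall>x. finite {y. adj x y}) \<and>
     (\<forall>x y. \<exists>xs. is_walk adj xs \<and> hd xs = x \<and> last xs = y)"

definition gdist :: "('a \<Rightarrow> 'a \<Rightarrow> bool) \<Rightarrow> 'a \<Rightarrow> 'a \<Rightarrow> nat" where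
  "gdist adj x y = (LEAST n. \<exists>xs. is_walk adj xs \<and> hd xs = x \<and> last xs = y \<and> length xs = Suc n)"

definition is_geodesic :: "('a \<Rightarrow> 'a \<Rightarrow> bool) \<Rightarrow> 'a list \<Rightarrow> bool" where
  "is_geodesic adj \<gamma> \<longleftrightarrow> is_walk adj \<gamma> \<and> length \<gamma> = Suc (gdist adj (hd \<gamma>) (last \<gamma>))"

definition fin_prob :: "('a \<Rightarrow> real) \<Rightarrow> bool" where
  "fin_prob f \<longleftrightarrow> (\<forall>x. 0 \<le> f x) \<and> finite {x. f x \<noteq> 0} \<and> (\<Sum>x\<in>{x. f x \<noteq> 0}. f x) = 1"

definition coupling :: "('a \<Rightarrow> real) \<Rightarrow> ('a \<Rightarrow> real) \<Rightarrow> ('a \<Rightarrow> 'a \<Rightarrow> real) \<Rightarrow> bool" where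
  "coupling f0 f1 \<pi> \<longleftrightarrow> (\<forall>x y. 0 \<le> \<pi> x y) \<and> finite {(x, y). \<pi> x y \<noteq> 0} \<and>
     (\<forall>x. (\<Sum>y\<in>{y. \<pi> x y \<noteq> 0}. \<pi> x y) = f0 x) \<and>
     (\<forall>y. (\<Sum>x\<in>{x. \<pi> x y \<noteq> 0}. \<pi> x y) = f1 y)"

definition transport_cost :: "('a \<Rightarrow> 'a \<Rightarrow> bool) \<Rightarrow> ('a \<Rightarrow> 'a \<Rightarrow> real) \<Rightarrow> real" where
  "transport_cost adj \<pi> = (\<Sum>(x, y)\<in>{(x, y). \<pi> x y \<noteq> 0}. real (gdist adj x y) * \<pi> x y)"

definition W1 :: "('a \<Rightarrow> 'a \<Rightarrow> bool) \<Rightarrow> ('a \<Rightarrow> real) \<Rightarrow> ('a \<Rightarrow> real) \<Rightarrow> real" where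
  "W1 adj f0 f1 = Inf {transport_cost adj \<pi> | \<pi>. coupling f0 f1 \<pi>}"

definition opt_couplings :: "('a \<Rightarrow> 'a \<Rightarrow> bool) \<Rightarrow> ('a \<Rightarrow> real) \<Rightarrow> ('a \<Rightarrow> real) \<Rightarrow> ('a \<Rightarrow> 'a \<Rightarrow> real) set" where
  "opt_couplings adj f0 f1 = {\<pi>. coupling f0 f1 \<pi> \<and> transport_cost adj \<pi> = W1 adj f0 f1}"

definition opt_supp :: "('a \<Rightarrow> 'a \<Rightarrow> bool) \<Rightarrow> ('a \<Rightarrow> real) \<Rightarrow> ('a \<Rightarrow> real) \<Rightarrow> ('a \<times> 'a) set" where
  "opt_supp adj f0 f1 = {(x, y). \<exists>\<pi>\<in>opt_couplings adj f0 f1. \<pi> x y > 0}"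

definition arr :: "('a \<Rightarrow> 'a \<Rightarrow> bool) \<Rightarrow> ('a \<Rightarrow> real) \<Rightarrow> ('a \<Rightarrow> real) \<Rightarrow> 'a \<Rightarrow> 'a \<Rightarrow> bool" where
  "arr adj f0 f1 x y \<longleftrightarrow> adj x y \<and>
     (\<exists>\<gamma> k. is_geodesic adj \<gamma> \<and> (hd \<gamma>, last \<gamma>) \<in> opt_supp adj f0 f1 \<and>
            Suc k < length \<gamma> \<and> \<gamma> ! k = x \<and> \<gamma> ! Suc k = y)"

definition Fwd :: "('a \<Rightarrow> 'a \<Rightarrow> bool) \<Rightarrow> 'a \<Rightarrow> 'a set" where
  "Fwd R x = {y. R x y}"

definition Bwd :: "('a \<Rightarrow> 'a \<Rightarrow> bool) \<Rightarrow> 'a \<Rightarrow> 'a set" where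
  "Bwd R x = {y. R y x}"

definition grad_v :: "('a \<Rightarrow> 'a \<Rightarrow> bool) \<Rightarrow> ('a \<Rightarrow> 'a \<Rightarrow> real) \<Rightarrow> 'a \<Rightarrow> real" where
  "grad_v R g x1 = (\<Sum>x2\<in>Fwd R x1. g x1 x2) - (\<Sum>x0\<in>Bwd R x1. g x0 x1)"

definition grad_e :: "('a \<Rightarrow> 'a \<Rightarrow> bool) \<Rightarrow> ('a \<Rightarrow> 'a \<Rightarrow> 'a \<Rightarrow> real) \<Rightarrow> 'a \<Rightarrow> 'a \<Rightarrow> real" where
  "grad_e R h x1 x2 = (\<Sum>x3\<in>Fwd R x2. h x1 x2 x3) - (\<Sum>x0\<in>Bwd R x1. h x0 x1 x2)"

definition oriented_path :: "('a \<Rightarrow> 'a \<Rightarrow> bool) \<Rightarrow> 'a list \<Rightarrow> bool" where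
  "oriented_path R \<gamma> \<longleftrightarrow> \<gamma> \<noteq> [] \<and> successively R \<gamma>"

definition sources :: "('a \<Rightarrow> 'a \<Rightarrow> bool) \<Rightarrow> 'a set" where
  "sources R = {x. Bwd R x = {}}"

definition sinks :: "('a \<Rightarrow> 'a \<Rightarrow> bool) \<Rightarrow> 'a set" where
  "sinks R = {x. Fwd R x = {}}"

definition SEGamma1 :: "('a \<Rightarrow> 'a \<Rightarrow> bool) \<Rightarrow> 'a \<Rightarrow> 'a list set" where
  "SEGamma1 R x = {\<gamma>. oriented_path R \<gamma> \<and> hd \<gamma> \<in> sources R \<and> last \<gamma> = x}"

definition SEGamma2 :: "('a \<Rightarrow> 'a \<Rightarrow> bool) \<Rightarrow> 'a \<Rightarrow> 'a list set" where
  "SEGamma2 R x = {\<gamma>. oriented_path R \<gamma> \<and> hd \<gamma> = x \<and> last \<gamma> \<in> sinks R}"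

text \<open>Concatenation of gamma (ending at x) with gamma' (starting at x).\<close>
definition path_concat :: "'a list \<Rightarrow> 'a list \<Rightarrow> 'a list" where
  "path_concat \<gamma> \<gamma>' = \<gamma> @ tl \<gamma>'"

definition W1plus_geodesic ::
  "('a \<Rightarrow> 'a \<Rightarrow> bool) \<Rightarrow> (real \<Rightarrow> 'a \<Rightarrow> real) \<Rightarrow> (real \<Rightarrow> 'a \<Rightarrow> 'a \<Rightarrow> real)
     \<Rightarrow> (real \<Rightarrow> 'a \<Rightarrow> 'a \<Rightarrow> 'a \<Rightarrow> real) \<Rightarrow> bool" where
  "W1plus_geodesic adj f g h \<longleftrightarrow>
     (let R = arr adj (f 0) (f 1) in
       (\<forall>t\<in>{0..1}. fin_prob (f t)) \<and>
       (\<forall>s\<in>{0..1}. \<forall>t\<in>{0..1}. W1 adj (f s) (f t) = \<bar>t - s\<bar> * W1 adj (f 0) (f 1)) \<and>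
       (\<forall>x. \<forall>t\<in>{0..1}. ((\<lambda>u. f u x) has_real_derivative - grad_v R (g t) x) (at t within {0..1})) \<and>
       (\<forall>x y. R x y \<longrightarrow> (\<forall>t\<in>{0..1}.
            ((\<lambda>u. g u x y) has_real_derivative - grad_e R (h t) x y) (at t within {0..1}))) \<and>
       (\<forall>x y. R x y \<longrightarrow> (\<forall>t\<in>{0..1}. g t x y > 0)) \<and>
       (\<forall>x0 x1 x2. R x0 x1 \<and> R x1 x2 \<longrightarrow>
            (\<forall>t\<in>{0..1}. f t x1 * h t x0 x1 x2 = g t x0 x1 * g t x1 x2)))"

text \<open>C_gamma(t) for an oriented path gamma = gamma_0,...,gamma_n (list of length n+1).\<close>
definition Cpath :: "(real \<Rightarrow> 'a \<Rightarrow> real) \<Rightarrow> (real \<Rightarrow> 'a \<Rightarrow> 'a \<Rightarrow> real) \<Rightarrow> 'a list \<Rightarrow> real \<Rightarrow> real" where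
  "Cpath f g \<gamma> t =
     (if length \<gamma> = 1 then f t (\<gamma> ! 0)
      else if length \<gamma> = 2 then g t (\<gamma> ! 0) (\<gamma> ! 1)
      else (\<Prod>i<length \<gamma> - 1. g t (\<gamma> ! i) (\<gamma> ! Suc i)) / (\<Prod>j\<in>{1..<length \<gamma> - 1}. f t (\<gamma> ! j)))"

end

theory Submission
  imports Defs
begin

text \<open>Write C(xs) = P(xs) / I(xs), with P the product of g over the arcs and I the product of f
  over the interior vertices. Under concatenation at x the arc products multiply, while the
  interior of the concatenation consists of both interiors together with x itself; hence
  C(\<gamma>) C(\<gamma>') = f(x) C(\<gamma> \<union> \<gamma>'). Along an oriented path every interior vertex v has arcs
  u \<rightarrow> v \<rightarrow> w, so f(v) h(u v w) = g(u v) g(v w) > 0 forces f(v) \<noteq> 0, and C(\<gamma> \<union> \<gamma>') may be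
  divided out.\<close>

fun arc_prod :: "('a \<Rightarrow> 'a \<Rightarrow> real) \<Rightarrow> 'a list \<Rightarrow> real" where
  "arc_prod G (a # b # xs) = G a b * arc_prod G (b # xs)"
| "arc_prod G _ = 1"

definition interior_vertices :: "'a list \<Rightarrow> 'a list" where
  "interior_vertices xs = butlast (tl xs)"

lemma prod_lessThan_conv_arc_prod:
  "(\<Prod>i<length xs - 1. G (xs ! i) (xs ! Suc i)) = arc_prod G xs"
proof (induction G xs rule: arc_prod.induct)
  case (1 G a b xs)
  have "(\<Prod>i<length (a # b # xs) - 1. G ((a # b # xs) ! i) ((a # b # xs) ! Suc i))
      = G a b * (\<Prod>i<length (b # xs) - 1. G ((b # xs) ! i) ((b # xs) ! Suc i))"
    by (simp add: prod.lessThan_Suc_shift del: prod.lessThan_Suc)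
  then show ?case using 1 by simp
qed auto

lemma prod_lessThan_conv_prod_list: "(\<Prod>j<length ys. F (ys ! j)) = prod_list (map F ys)"
  by (induction ys) (simp_all add: prod.lessThan_Suc_shift del: prod.lessThan_Suc)

lemma prod_interior_conv_prod_list:
  "(\<Prod>j\<in>{1..<length xs - 1}. F (xs ! j)) = prod_list (map F (interior_vertices xs))"
proof (cases xs)
  case (Cons a ys)
  have "(\<Prod>j\<in>{1..<length xs - 1}. F (xs ! j)) = (\<Prod>j\<in>{0..<length ys - 1}. F (ys ! j))"
    using Cons prod.shift_bounds_Suc_ivl[of "\<lambda>j. F ((a # ys) ! j)" 0 "length ys - 1"]
    by (cases ys) auto
  also have "\<dots> = (\<Prod>j<length (butlast ys). F (butlast ys ! j))"
    by (intro prod.cong) (auto simp: nth_butlast atLeast0LessThan)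
  finally show ?thesis
    using Cons prod_lessThan_conv_prod_list[of F "butlast ys"] by (simp add: interior_vertices_def)
qed (simp add: interior_vertices_def)

lemma Cpath_eq_arc_prod_div:
  assumes "length xs \<ge> 2"
  shows "Cpath f g xs t = arc_prod (g t) xs / prod_list (map (f t) (interior_vertices xs))"
  using assms
  unfolding Cpath_def prod_lessThan_conv_arc_prod prod_interior_conv_prod_list
  by (cases xs rule: remdups_adj.cases) (auto simp: interior_vertices_def)

lemma arc_prod_path_concat:
  "xs \<noteq> [] \<Longrightarrow> ys \<noteq> [] \<Longrightarrow> last xs = hd ys \<Longrightarrow> arc_prod G (path_concat xs ys) = arc_prod G xs * arc_prod G ys"
  unfolding path_concat_def
  by (induction G xs rule: arc_prod.induct) (auto simp: neq_Nil_conv)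

lemma interior_vertices_path_concat:
  assumes "length xs \<ge> 2" "length ys \<ge> 2" "last xs = hd ys"
  shows "interior_vertices (path_concat xs ys)
           = interior_vertices xs @ [last xs] @ interior_vertices ys"
proof -
  obtain a us where xs: "xs = a # us" "us \<noteq> []"
    using assms(1) by (cases xs; cases "tl xs") auto
  obtain b vs where ys: "ys = b # vs" "vs \<noteq> []"
    using assms(2) by (cases ys; cases "tl ys") auto
  show ?thesis
    using xs ys assms(3)
    by (simp add: interior_vertices_def path_concat_def butlast_append)
      (metis append_butlast_last_id)
qed

lemma arc_prod_pos:
  "successively R xs \<Longrightarrow> (\<And>a b. R a b \<Longrightarrow> G a b > 0) \<Longrightarrow> arc_prod G xs > 0"
  by (induction G xs rule: arc_prod.induct) auto

lemma interior_vertex_has_arcs: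
  "successively R xs \<Longrightarrow> v \<in> set (interior_vertices xs) \<Longrightarrow> \<exists>u w. R u v \<and> R v w"
  unfolding interior_vertices_def
proof (induction xs rule: remdups_adj.induct)
  case (3 a b xs)
  then show ?case by (cases "v = b"; cases xs) auto
qed auto

lemma Cpath_path_concat_mult:
  assumes "xs \<noteq> []" "ys \<noteq> []" "last xs = hd ys"
    and nz: "\<And>v. v \<in> set (interior_vertices (path_concat xs ys)) \<Longrightarrow> f t v \<noteq> 0"
  shows "Cpath f g (path_concat xs ys) t * f t (last xs) = Cpath f g xs t * Cpath f g ys t"
proof (cases "length xs \<ge> 2 \<and> length ys \<ge> 2")
  case False
  with assms(1,2) have "length xs = 1 \<or> length ys = 1"
    by (auto simp flip: length_greater_0_conv)
  then consider v where "xs = [v]" | v where "ys = [v]"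
    by (auto simp: length_Suc_conv)
  then show ?thesis
  proof cases
    case 1
    with assms(3) have "path_concat xs ys = ys"
      using assms(2) by (simp add: path_concat_def)
    with 1 show ?thesis
      by (simp add: Cpath_def)
  next
    case 2
    with assms(3) show ?thesis
      by (simp add: Cpath_def path_concat_def)
  qed
next
  case True
  then have long: "length xs \<ge> 2" "length ys \<ge> 2"
    by simp_all
  then have long_concat: "length (path_concat xs ys) \<ge> 2"
    by (simp add: path_concat_def)
  note interior = interior_vertices_path_concat[OF long assms(3)]
  have "prod_list (map (f t) (interior_vertices xs)) \<noteq> 0"
       "f t (last xs) \<noteq> 0"
       "prod_list (map (f t) (interior_vertices ys)) \<noteq> 0"
    using nz unfolding interior by (auto simp: prod_list_zero_iff)
  then show ?thesis
    unfolding Cpath_eq_arc_prod_div[OF long_concat] Cpath_eq_arc_prod_div[OF long(1)]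
      Cpath_eq_arc_prod_div[OF long(2)] arc_prod_path_concat[OF assms(1-3)] interior
    by (simp add: field_simps)
qed

lemma Cpath_nonzero:
  assumes "successively R xs" "length xs \<ge> 2"
    and "\<And>a b. R a b \<Longrightarrow> g t a b > 0"
    and "\<And>v. v \<in> set (interior_vertices xs) \<Longrightarrow> f t v \<noteq> 0"
  shows "Cpath f g xs t \<noteq> 0"
  using arc_prod_pos[where G = "g t", OF assms(1,3)] assms(4)
  by (auto simp: Cpath_eq_arc_prod_div[OF assms(2)] prod_list_zero_iff)

lemma vertex_value_path_concat:
  assumes "xs \<noteq> []" "ys \<noteq> []" "last xs = hd ys"
    and arcs: "successively R (path_concat xs ys)"
    and g_pos: "\<And>a b. R a b \<Longrightarrow> g t a b > 0"
    and f_nz: "\<And>u v w. R u v \<Longrightarrow> R v w \<Longrightarrow> f t v \<noteq> 0"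
  shows "f t (last xs) = Cpath f g xs t * Cpath f g ys t / Cpath f g (path_concat xs ys) t"
proof -
  have nz: "f t v \<noteq> 0" if "v \<in> set (interior_vertices (path_concat xs ys))" for v
    using interior_vertex_has_arcs[OF arcs that] f_nz by blast
  note mult = Cpath_path_concat_mult[where f = f and t = t and g = g, OF assms(1-3) nz]
  show ?thesis
  proof (cases "length (path_concat xs ys) \<ge> 2")
    case True
    with Cpath_nonzero[where f = f and g = g and t = t, OF arcs True g_pos nz] mult show ?thesis
      by (simp add: field_simps)
  next
    case False
    \<comment> \<open>All three paths are [v]; the identity f v = f v * f v / f v survives f v = 0 since x / 0 = 0.\<close>
    then obtain v where "xs = [v]" "ys = [v]"
      using assms(1-3) by (cases xs; cases ys) (auto simp: path_concat_def Suc_le_eq)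
    then show ?thesis
      by (simp add: Cpath_def path_concat_def)
  qed
qed

lemma successively_path_concat:
  "successively R xs \<Longrightarrow> successively R ys \<Longrightarrow> xs \<noteq> [] \<Longrightarrow> last xs = hd ys
    \<Longrightarrow> successively R (path_concat xs ys)"
  unfolding path_concat_def
  by (cases ys rule: remdups_adj.cases) (auto simp: successively_append_iff)

lemma W1plus_geodesic_arc_pos:
  assumes "W1plus_geodesic adj f g h" "t \<in> {0..1}" "arr adj (f 0) (f 1) a b"
  shows "g t a b > 0"
  using assms unfolding W1plus_geodesic_def Let_def by blast

lemma W1plus_geodesic_transit_vertex_nonzero:
  assumes "W1plus_geodesic adj f g h" "t \<in> {0..1}"
    and "arr adj (f 0) (f 1) u v" "arr adj (f 0) (f 1) v w"
  shows "f t v \<noteq> 0"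
proof
  assume "f t v = 0"
  moreover have "f t v * h t u v w = g t u v * g t v w"
    using assms unfolding W1plus_geodesic_def Let_def by blast
  ultimately show False
    using W1plus_geodesic_arc_pos[OF assms(1,2)] assms(3,4)
    by (metis mult_eq_0_iff mult_zero_left order_less_irrefl)
qed

theorem proposition3p9:
  fixes adj :: "'a \<Rightarrow> 'a \<Rightarrow> bool"
    and f :: "real \<Rightarrow> 'a \<Rightarrow> real" and g :: "real \<Rightarrow> 'a \<Rightarrow> 'a \<Rightarrow> real"
    and h :: "real \<Rightarrow> 'a \<Rightarrow> 'a \<Rightarrow> 'a \<Rightarrow> real"
    and x :: 'a and \<gamma> \<gamma>' :: "'a list" and t :: real
  assumes "conn_locfin_graph adj"
    and "W1plus_geodesic adj f g h"
    and "\<gamma> \<in> SEGamma1 (arr adj (f 0) (f 1)) x"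
    and "\<gamma>' \<in> SEGamma2 (arr adj (f 0) (f 1)) x"
    and "t \<in> {0..1}"
  shows "f t x = Cpath f g \<gamma> t * Cpath f g \<gamma>' t / Cpath f g (path_concat \<gamma> \<gamma>') t"
proof -
  let ?R = "arr adj (f 0) (f 1)"
  have \<gamma>: "\<gamma> \<noteq> []" "successively ?R \<gamma>" "last \<gamma> = x"
    using assms(3) unfolding SEGamma1_def oriented_path_def by auto
  have \<gamma>': "\<gamma>' \<noteq> []" "successively ?R \<gamma>'" "hd \<gamma>' = x"
    using assms(4) unfolding SEGamma2_def oriented_path_def by auto
  have "f t (last \<gamma>) = Cpath f g \<gamma> t * Cpath f g \<gamma>' t / Cpath f g (path_concat \<gamma> \<gamma>') t"
  proof (rule vertex_value_path_concat)
    show "successively ?R (path_concat \<gamma> \<gamma>')"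
      using \<gamma> \<gamma>' by (simp add: successively_path_concat)
  qed (use \<gamma> \<gamma>' W1plus_geodesic_arc_pos[OF assms(2,5)]
         W1plus_geodesic_transit_vertex_nonzero[OF assms(2,5)] in auto)
  then show ?thesis using \<gamma>(3) by simp
qed

end
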